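(* Let $u\in W^v$ and $\mu\in Y$. For every $\nu\in R_u(\mu)$ there exist real numbers $\lambda_{u'}\in[0,1]$, $u'\in[1,u]$, with $\sum_{u'\le u}\lambda_{u'}=1$ and $\nu=\sum_{u'\le u}\lambda_{u'}\,u'(\mu)$.
   Context: $I$ finite, $A$ a generalized Cartan matrix, $Y$ a free $\mathbb Z$-module of finite rank with free family $(\alpha_i^\vee)_{i\in I}$ and $\alpha_i\in\mathrm{Hom}(Y,\mathbb Z)$ with $\alpha_j(\alpha_i^\vee)=a_{i,j}$; $\mathbb A=Y\otimes\mathbb R$; $r_i(v)=v-\alpha_i(v)\alpha_i^\vee$; $W^v=\langle r_i\rangle$ with Bruhat order $\le$, $[1,u]=\{w:w\le u\}$; $Q^\vee=\bigoplus\mathbb Z\alpha_i^\vee$. For $E\subset Y$, $R_i(E)=\mathrm{conv}(E\cup r_i(E))\cap(E+Q^\vee)$; for $w\in W^v$, $\lambda\in Y$, $R_w(\lambda)=\bigcup R_{i_1}(R_{i_2}(\cdots R_{i_k}(\{\lambda\})\cdots))$ over all reduced expressions $w=r_{i_1}\cdots r_{i_k}$. *)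

theory Defs
  imports "HOL-Analysis.Analysis"
begin

text \<open>Y is modelled as the lattice of integer points of real^'d (free Z-module of rank CARD('d));
  A = Y \<otimes> R is real^'d.  alpha i is the integer coefficient vector of the form alpha_i,
  so alpha_i(v) = alpha i \<bullet> v.  coalpha i is the coroot alpha_i^vee.\<close>

definition Ylat :: "(real^'d) set" where
  "Ylat = {v. \<forall>k. v $ k \<in> \<int>}"

definition gcm :: "'i set \<Rightarrow> ('i \<Rightarrow> 'i \<Rightarrow> int) \<Rightarrow> bool" where
  "gcm I a \<longleftrightarrow> (\<forall>i\<in>I. a i i = 2) \<and> (\<forall>i\<in>I. \<forall>j\<in>I. i \<noteq> j \<longrightarrow> a i j \<le> 0)
     \<and> (\<forall>i\<in>I. \<forall>j\<in>I. a i j = 0 \<longleftrightarrow> a j i = 0)"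

definition srefl :: "('i \<Rightarrow> real^'d) \<Rightarrow> ('i \<Rightarrow> real^'d) \<Rightarrow> 'i \<Rightarrow> real^'d \<Rightarrow> real^'d" where
  "srefl alpha coalpha i v = v - (alpha i \<bullet> v) *\<^sub>R coalpha i"

definition wmap :: "('i \<Rightarrow> real^'d) \<Rightarrow> ('i \<Rightarrow> real^'d) \<Rightarrow> 'i list \<Rightarrow> real^'d \<Rightarrow> real^'d" where
  "wmap alpha coalpha ws = foldr (\<lambda>i f. srefl alpha coalpha i \<circ> f) ws id"

definition Weyl :: "'i set \<Rightarrow> ('i \<Rightarrow> real^'d) \<Rightarrow> ('i \<Rightarrow> real^'d) \<Rightarrow> (real^'d \<Rightarrow> real^'d) set" where
  "Weyl I alpha coalpha = {wmap alpha coalpha ws | ws. set ws \<subseteq> I}"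

definition wlen :: "'i set \<Rightarrow> ('i \<Rightarrow> real^'d) \<Rightarrow> ('i \<Rightarrow> real^'d) \<Rightarrow> (real^'d \<Rightarrow> real^'d) \<Rightarrow> nat" where
  "wlen I alpha coalpha w = (LEAST n. \<exists>ws. set ws \<subseteq> I \<and> length ws = n \<and> wmap alpha coalpha ws = w)"

definition reduced_expr :: "'i set \<Rightarrow> ('i \<Rightarrow> real^'d) \<Rightarrow> ('i \<Rightarrow> real^'d) \<Rightarrow> (real^'d \<Rightarrow> real^'d) \<Rightarrow> 'i list \<Rightarrow> bool" where
  "reduced_expr I alpha coalpha w ws \<longleftrightarrow> set ws \<subseteq> I \<and> wmap alpha coalpha ws = w
      \<and> length ws = wlen I alpha coalpha w"

text \<open>Reflections of W^v: conjugates w r_i w^{-1}; note wmap (rev ws) is the inverse of wmap ws.\<close>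
definition Wrefls :: "'i set \<Rightarrow> ('i \<Rightarrow> real^'d) \<Rightarrow> ('i \<Rightarrow> real^'d) \<Rightarrow> (real^'d \<Rightarrow> real^'d) set" where
  "Wrefls I alpha coalpha = {wmap alpha coalpha ws \<circ> srefl alpha coalpha i \<circ> wmap alpha coalpha (rev ws)
      | ws i. set ws \<subseteq> I \<and> i \<in> I}"

definition bruhat_step :: "'i set \<Rightarrow> ('i \<Rightarrow> real^'d) \<Rightarrow> ('i \<Rightarrow> real^'d) \<Rightarrow> (real^'d \<Rightarrow> real^'d) \<Rightarrow> (real^'d \<Rightarrow> real^'d) \<Rightarrow> bool" where
  "bruhat_step I alpha coalpha x y \<longleftrightarrow> x \<in> Weyl I alpha coalpha
     \<and> (\<exists>t\<in>Wrefls I alpha coalpha. y = x \<circ> t) \<and> wlen I alpha coalpha x < wlen I alpha coalpha y"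

definition bruhat_le :: "'i set \<Rightarrow> ('i \<Rightarrow> real^'d) \<Rightarrow> ('i \<Rightarrow> real^'d) \<Rightarrow> (real^'d \<Rightarrow> real^'d) \<Rightarrow> (real^'d \<Rightarrow> real^'d) \<Rightarrow> bool" where
  "bruhat_le I alpha coalpha x y \<longleftrightarrow> x \<in> Weyl I alpha coalpha \<and> (bruhat_step I alpha coalpha)\<^sup>*\<^sup>* x y"

definition Qcoroot :: "'i set \<Rightarrow> ('i \<Rightarrow> real^'d) \<Rightarrow> (real^'d) set" where
  "Qcoroot I coalpha = {\<Sum>i\<in>I. of_int (n i) *\<^sub>R coalpha i | n. True}"

definition Rop :: "'i set \<Rightarrow> ('i \<Rightarrow> real^'d) \<Rightarrow> ('i \<Rightarrow> real^'d) \<Rightarrow> 'i \<Rightarrow> (real^'d) set \<Rightarrow> (real^'d) set" where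
  "Rop I alpha coalpha i E = convex hull (E \<union> srefl alpha coalpha i ` E)
      \<inter> {e + q | e q. e \<in> E \<and> q \<in> Qcoroot I coalpha}"

definition Rw :: "'i set \<Rightarrow> ('i \<Rightarrow> real^'d) \<Rightarrow> ('i \<Rightarrow> real^'d) \<Rightarrow> (real^'d \<Rightarrow> real^'d) \<Rightarrow> real^'d \<Rightarrow> (real^'d) set" where
  "Rw I alpha coalpha w lam = \<Union> {foldr (Rop I alpha coalpha) ws {lam} | ws. reduced_expr I alpha coalpha w ws}"

end

theory Submission
  imports Defs "HOL-Library.Sublist"
begin

text \<open>
  Along a reduced expression \<open>u = r\<^sub>i\<^sub>1 \<cdots> r\<^sub>i\<^sub>k\<close>, applying \<open>R\<^sub>i\<close> to a point either keeps
  it or reflects it by \<open>r\<^sub>i\<close>, so \<open>R\<^sub>i\<^sub>1(\<cdots>R\<^sub>i\<^sub>k({\<mu>})\<cdots>)\<close> lies in the convex hull of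
  the points \<open>v(\<mu>)\<close>, \<open>v\<close> given by a subword of \<open>i\<^sub>1\<cdots>i\<^sub>k\<close>. By the subword property of the
  Bruhat order all these \<open>v\<close> lie in the finite interval \<open>[1, u]\<close>.

  The subword property follows from the lifting property, which rests on the strong exchange
  condition. That in turn comes from the geometry of the coroots: every \<open>w(\<alpha>\<^sub>k\<^sup>\<or>)\<close> is a
  nonnegative or a nonpositive combination of simple coroots, and if \<open>w(\<alpha>\<^sub>k\<^sup>\<or>)\<close> is a multiple
  of \<open>\<alpha>\<^sub>m\<^sup>\<or>\<close> then \<open>w r\<^sub>k w\<^sup>-\<^sup>1 = r\<^sub>m\<close>. The sign property is proved by induction on the length
  of \<open>w\<close>, splitting off a factor in a rank-two subgroup \<open>\<langle>r\<^sub>i, r\<^sub>j\<rangle>\<close>; there the coordinates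
  along alternating words are explicit and stay nonnegative, forever if \<open>a\<^sub>i\<^sub>j a\<^sub>j\<^sub>i \<ge> 4\<close> and
  up to the braid length otherwise.
\<close>

fun alt_word :: "'i \<Rightarrow> 'i \<Rightarrow> nat \<Rightarrow> 'i list" where
  "alt_word j i 0 = []"
| "alt_word j i (Suc n) = alt_word i j n @ [j]"

lemma length_alt_word [simp]: "length (alt_word j i n) = n"
  by (induction n arbitrary: i j) auto

lemma set_alt_word: "set (alt_word j i n) \<subseteq> {i, j}"
  by (induction n arbitrary: i j) auto

lemma last_alt_word: "0 < n \<Longrightarrow> last (alt_word j i n) = j"
  by (cases n) auto

lemma alt_word_Suc_Cons: "alt_word j i (Suc n) = (if even n then j else i) # alt_word j i n"
  by (induction n arbitrary: i j) auto

lemma alt_word_suffix: "\<exists>xs. alt_word j i (d + n) = xs @ alt_word j i n"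
  by (induction n arbitrary: i j) auto

lemma not_distinct_adj_split: "\<not> distinct_adj vs \<Longrightarrow> \<exists>xs x ys. vs = xs @ x # x # ys"
proof (induction vs rule: induct_list012)
  case (3 x y zs)
  show ?case
  proof (cases "x = y")
    case True
    then show ?thesis by (metis append_Nil)
  next
    case False
    with 3 obtain xs z ys where "y # zs = xs @ z # z # ys" by auto
    then show ?thesis by (metis append_Cons)
  qed
qed auto

lemma alternating_word_eq_alt_word:
  assumes "i \<noteq> j" "set vs \<subseteq> {i, j}" "distinct_adj vs" "vs \<noteq> [] \<longrightarrow> last vs = j"
  shows "vs = alt_word j i (length vs)"
  using assms(2-)
proof (induction vs)
  case (Cons x vs)
  show ?case
  proof (cases vs)
    case (Cons y ys)
    then obtain m where m: "length vs = Suc m" by auto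
    have IH: "vs = alt_word j i (Suc m)"
      using Cons.IH Cons.prems distinct_adj_ConsD[of x vs] \<open>vs = y # ys\<close> m by auto
    have "x \<noteq> hd vs" "x \<in> {i, j}"
      using Cons.prems \<open>vs = y # ys\<close> by auto
    then have "x = (if even (Suc m) then j else i)"
      using IH alt_word_Suc_Cons[of j i m] assms(1) by (auto split: if_splits)
    then show ?thesis
      using IH m alt_word_Suc_Cons[of j i "Suc m"] by simp
  qed (use Cons.prems in auto)
qed simp

section \<open>Coordinates in rank two\<close>

text \<open>Coordinates of \<open>r\<^sub>j, r\<^sub>i r\<^sub>j, r\<^sub>j r\<^sub>i r\<^sub>j, \<dots>\<close> applied to \<open>\<alpha>\<^sub>i\<^sup>\<or>\<close> in the basis
  \<open>\<alpha>\<^sub>i\<^sup>\<or>, \<alpha>\<^sub>j\<^sup>\<or>\<close>, where \<open>A = -a\<^sub>j\<^sub>i\<close> and \<open>B = -a\<^sub>i\<^sub>j\<close>.\<close>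
fun rank2_coords :: "real \<Rightarrow> real \<Rightarrow> nat \<Rightarrow> real \<times> real" where
  "rank2_coords A B 0 = (1, 0)"
| "rank2_coords A B (Suc n) = (case rank2_coords A B n of (x, y) \<Rightarrow>
     if even n then (x, B * x - y) else (A * y - x, y))"

lemma rank2_coords_nonneg_infinite_type:
  assumes "0 \<le> A" "0 \<le> B" "4 \<le> A * B"
  shows "0 \<le> fst (rank2_coords A B n) \<and> 0 \<le> snd (rank2_coords A B n)"
proof -
  text \<open>The invariant makes every new coordinate \<open>B x - y\<close> resp. \<open>A y - x\<close> at least the one
    it replaces.\<close>
  have "0 \<le> x \<and> 0 \<le> y \<and> (even n \<longrightarrow> 2 * y \<le> B * x) \<and> (odd n \<longrightarrow> 2 * x \<le> A * y)"
    if "rank2_coords A B n = (x, y)" for x y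
    using that
  proof (induction n arbitrary: x y)
    case (Suc n)
    obtain x' y' where xy': "rank2_coords A B n = (x', y')" by fastforce
    note IH = Suc.IH[OF xy']
    show ?case
    proof (cases "even n")
      case True
      then have "2 * x' \<le> A * (B * x' - y')"
        using IH mult_left_mono[of "2 * y'" "B * x'" A] mult_right_mono[of 4 "A * B" x'] assms
        by (simp add: algebra_simps)
      then show ?thesis using Suc.prems xy' True IH by auto
    next
      case False
      then have "2 * y' \<le> B * (A * y' - x')"
        using IH mult_left_mono[of "2 * x'" "A * y'" B] mult_right_mono[of 4 "A * B" y'] assms
        by (simp add: algebra_simps)
      then show ?thesis using Suc.prems xy' False IH by auto
    qed
  qed (use assms in auto)
  then show ?thesis by (metis prod.collapse)
qed

definition finite_type_pairs :: "(int \<times> int) set" where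
  "finite_type_pairs = {(0, 0), (-1, -1), (-1, -2), (-2, -1), (-1, -3), (-3, -1)}"

lemma finite_type_pairsI:
  fixes p q :: int
  assumes "p \<le> 0" "q \<le> 0" "p = 0 \<longleftrightarrow> q = 0" "p * q < 4"
  shows "(p, q) \<in> finite_type_pairs"
proof -
  have "-3 \<le> p"
  proof (rule ccontr)
    assume "\<not> -3 \<le> p"
    then have "4 * 1 \<le> (- p) * (- q)" using assms by (intro mult_mono) auto
    then show False using assms(4) by simp
  qed
  moreover have "-3 \<le> q"
  proof (rule ccontr)
    assume "\<not> -3 \<le> q"
    then have "1 * 4 \<le> (- p) * (- q)" using assms by (intro mult_mono) auto
    then show False using assms(4) by simp
  qed
  ultimately have "p \<in> {0, -1, -2, -3}" "q \<in> {0, -1, -2, -3}" using assms(1,2) by auto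
  then show ?thesis using assms(3,4) unfolding finite_type_pairs_def by auto
qed

definition dihedral_order :: "int \<Rightarrow> nat" where
  "dihedral_order p = (if p = 0 then 2 else if p = 1 then 3 else if p = 2 then 4 else 6)"

lemma rank2_coords_nonneg_finite_type:
  fixes p q :: int
  assumes "(p, q) \<in> finite_type_pairs" and "n < dihedral_order (p * q)"
  shows "0 \<le> fst (rank2_coords (- of_int q) (- of_int p) n) \<and> 0 \<le> snd (rank2_coords (- of_int q) (- of_int p) n)"
  using assms unfolding finite_type_pairs_def
  by (elim insertE emptyE; clarsimp simp: dihedral_order_def less_Suc_eq numeral_eq_Suc; elim disjE; simp)

locale gcm_realization =
  fixes I :: "'i set" and a :: "'i \<Rightarrow> 'i \<Rightarrow> int" and alpha coalpha :: "'i \<Rightarrow> real^'d"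
  assumes finite_I: "finite I" and gcm: "gcm I a"
    and inj_coalpha: "inj_on coalpha I" and independent_coalpha: "independent (coalpha ` I)"
    and pairing: "\<And>i j. i \<in> I \<Longrightarrow> j \<in> I \<Longrightarrow> alpha j \<bullet> coalpha i = of_int (a i j)"
begin

abbreviation r where "r \<equiv> srefl alpha coalpha"
abbreviation wm where "wm \<equiv> wmap alpha coalpha"
abbreviation W where "W \<equiv> Weyl I alpha coalpha"
abbreviation len where "len \<equiv> wlen I alpha coalpha"

lemma cartan_diag: "i \<in> I \<Longrightarrow> a i i = 2"
  using gcm unfolding gcm_def by auto

lemma cartan_offdiag: "i \<in> I \<Longrightarrow> j \<in> I \<Longrightarrow> i \<noteq> j \<Longrightarrow> a i j \<le> 0 \<and> (a i j = 0 \<longleftrightarrow> a j i = 0)"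
  using gcm unfolding gcm_def by auto

lemma pairing_diag: "i \<in> I \<Longrightarrow> alpha i \<bullet> coalpha i = 2"
  by (simp add: pairing cartan_diag)

lemma r_r [simp]: "i \<in> I \<Longrightarrow> r i (r i v) = v"
  unfolding srefl_def by (simp add: pairing_diag inner_diff_right algebra_simps)

lemma r_coalpha [simp]: "i \<in> I \<Longrightarrow> r i (coalpha i) = - coalpha i"
  unfolding srefl_def by (simp add: pairing_diag scaleR_2)

lemma linear_r: "linear (r i)"
  unfolding srefl_def by (rule linearI) (auto simp: inner_add_right algebra_simps)

lemma wm_Nil [simp]: "wm [] = id"
  and wm_Cons [simp]: "wm (i # ws) = r i \<circ> wm ws"
  by (simp_all add: wmap_def)

lemma wm_append: "wm (xs @ ys) = wm xs \<circ> wm ys"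
  by (induction xs) auto

lemma wm_snoc_r [simp]: "i \<in> I \<Longrightarrow> wm (ws @ [i]) \<circ> r i = wm ws"
  by (simp add: wm_append fun_eq_iff)

lemma linear_wm: "linear (wm ws)"
proof (induction ws)
  case Nil
  show ?case using linear_id unfolding id_def by simp
next
  case (Cons i ws)
  show ?case using linear_compose[OF Cons.IH linear_r[of i]] by (simp add: o_def)
qed

lemma wm_rev_wm [simp]: "set ws \<subseteq> I \<Longrightarrow> wm (rev ws) (wm ws v) = v"
  by (induction ws arbitrary: v) (auto simp: wm_append)

lemma wm_wm_rev [simp]: "set ws \<subseteq> I \<Longrightarrow> wm ws (wm (rev ws) v) = v"
  using wm_rev_wm[of "rev ws"] by simp

lemma wm_eq_0_iff: "set ws \<subseteq> I \<Longrightarrow> wm ws v = 0 \<longleftrightarrow> v = 0"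
  by (metis linear_0[OF linear_wm] wm_rev_wm)

lemma Weyl_iff: "w \<in> W \<longleftrightarrow> (\<exists>ws. set ws \<subseteq> I \<and> w = wm ws)"
  unfolding Weyl_def by auto

lemma wm_in_Weyl [intro]: "set ws \<subseteq> I \<Longrightarrow> wm ws \<in> W"
  by (auto simp: Weyl_iff)

lemma comp_in_Weyl [intro]: "x \<in> W \<Longrightarrow> y \<in> W \<Longrightarrow> x \<circ> y \<in> W"
  unfolding Weyl_iff by (metis Un_least set_append wm_append)

lemma r_in_Weyl [intro]: "i \<in> I \<Longrightarrow> r i \<in> W"
  using wm_in_Weyl[of "[i]"] by simp

lemma id_in_Weyl [intro]: "id \<in> W"
  using wm_in_Weyl[of "[]"] by simp

lemma linear_Weyl: "w \<in> W \<Longrightarrow> linear w"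
  using linear_wm by (auto simp: Weyl_iff)

lemma len_le_length: "set ws \<subseteq> I \<Longrightarrow> len (wm ws) \<le> length ws"
  unfolding wlen_def by (rule Least_le) auto

lemma reduced_word_exists:
  assumes "w \<in> W" obtains ws where "set ws \<subseteq> I" "wm ws = w" "length ws = len w"
proof -
  from assms have "\<exists>n ws. set ws \<subseteq> I \<and> length ws = n \<and> wm ws = w"
    by (auto simp: Weyl_iff)
  from LeastI_ex[OF this] show ?thesis
    using that unfolding wlen_def by auto
qed

lemma len_comp_le: assumes "x \<in> W" "y \<in> W" shows "len (x \<circ> y) \<le> len x + len y"
proof -
  obtain xs ys where "set xs \<subseteq> I" "wm xs = x" "length xs = len x"
    and "set ys \<subseteq> I" "wm ys = y" "length ys = len y"
    using reduced_word_exists assms by metis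
  then show ?thesis
    using len_le_length[of "xs @ ys"] by (simp add: wm_append)
qed

lemma len_r_comp_le: "w \<in> W \<Longrightarrow> i \<in> I \<Longrightarrow> len (r i \<circ> w) \<le> len w + 1"
  using len_comp_le[of "r i" w] len_le_length[of "[i]"] by fastforce

lemma len_le_r_comp:
  assumes "w \<in> W" "i \<in> I" shows "len w \<le> len (r i \<circ> w) + 1"
proof -
  have "r i \<circ> (r i \<circ> w) = w" using assms(2) by (auto simp: fun_eq_iff)
  then show ?thesis using len_r_comp_le[of "r i \<circ> w" i] assms by auto
qed

lemma len_tl_reduced:
  assumes "set (i # ws) \<subseteq> I" "length (i # ws) = len (wm (i # ws))"
  shows "length ws = len (wm ws)"
  using assms len_le_length[of ws] len_r_comp_le[of "wm ws" i] by fastforce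

lemma right_descent_exists:
  assumes "w \<in> W" "w \<noteq> id" obtains j where "j \<in> I" "len (w \<circ> r j) < len w"
proof -
  obtain ws where ws: "set ws \<subseteq> I" "wm ws = w" "length ws = len w"
    using reduced_word_exists[OF assms(1)] by blast
  then obtain us j where us: "ws = us @ [j]"
    using assms(2) by (metis rev_exhaust wm_Nil)
  then have "j \<in> I" "set us \<subseteq> I" using ws(1) by auto
  moreover have "w \<circ> r j = wm us"
    unfolding ws(2)[symmetric] us using \<open>j \<in> I\<close> by simp
  ultimately have "len (w \<circ> r j) \<le> length us"
    using len_le_length[of us] by simp
  then show ?thesis using that \<open>j \<in> I\<close> ws(3) us by simp
qed

section \<open>The cone of nonnegative coroot combinations\<close>

definition coroot_cone :: "(real^'d) set" where
  "coroot_cone = {\<Sum>k\<in>I. n k *\<^sub>R coalpha k | n. \<forall>k\<in>I. 0 \<le> n k}"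

lemma coroot_coeffs_unique:
  assumes "(\<Sum>k\<in>I. n k *\<^sub>R coalpha k) = (\<Sum>k\<in>I. m k *\<^sub>R coalpha k)" "k \<in> I"
  shows "n k = m k"
proof (rule ccontr)
  define u where "u v = n (inv_into I coalpha v) - m (inv_into I coalpha v)" for v
  have "(\<Sum>v\<in>coalpha ` I. u v *\<^sub>R v) = (\<Sum>k\<in>I. (n k - m k) *\<^sub>R coalpha k)"
    by (simp add: sum.reindex[OF inj_coalpha] u_def inv_into_f_f[OF inj_coalpha])
  also have "\<dots> = 0"
    using assms(1) by (simp add: scaleR_diff_left sum_subtractf)
  finally have "(\<Sum>v\<in>coalpha ` I. u v *\<^sub>R v) = 0" .
  moreover assume "n k \<noteq> m k"
  then have "u (coalpha k) \<noteq> 0"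
    by (simp add: u_def inv_into_f_f[OF inj_coalpha assms(2)])
  ultimately have "dependent (coalpha ` I)"
    using assms(2) finite_I by (subst real_vector.dependent_finite) auto
  then show False using independent_coalpha by simp
qed

lemma nonneg_coeff_of_cone:
  assumes "(\<Sum>k\<in>I. n k *\<^sub>R coalpha k) \<in> coroot_cone" "k \<in> I"
  shows "0 \<le> n k"
proof -
  obtain m where "\<forall>k\<in>I. 0 \<le> m k" "(\<Sum>k\<in>I. n k *\<^sub>R coalpha k) = (\<Sum>k\<in>I. m k *\<^sub>R coalpha k)"
    using assms(1) unfolding coroot_cone_def by auto
  then show ?thesis using coroot_coeffs_unique assms(2) by metis
qed

lemma sum_coroot_single:
  "j \<in> I \<Longrightarrow> (\<Sum>k\<in>I. (if k = j then s else 0) *\<^sub>R coalpha k) = s *\<^sub>R coalpha j"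
  using finite_I by (simp add: if_distrib[of "\<lambda>x. x *\<^sub>R _"] sum.delta cong: if_cong)

lemma coalpha_in_cone: "k \<in> I \<Longrightarrow> coalpha k \<in> coroot_cone"
  unfolding coroot_cone_def
  by (rule CollectI, rule exI[of _ "\<lambda>k'. if k' = k then 1 else 0"]) (simp add: sum_coroot_single)

lemma cone_add: "x \<in> coroot_cone \<Longrightarrow> y \<in> coroot_cone \<Longrightarrow> x + y \<in> coroot_cone"
  unfolding coroot_cone_def
  by clarify (rule_tac x="\<lambda>k. _ k + _ k" in exI, auto simp: scaleR_add_left sum.distrib)

lemma cone_scale: "x \<in> coroot_cone \<Longrightarrow> 0 \<le> s \<Longrightarrow> s *\<^sub>R x \<in> coroot_cone"
  unfolding coroot_cone_def
  by clarify (rule_tac x="\<lambda>k. s * _ k" in exI, auto simp: scaleR_sum_right)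

lemma cone_antisym: assumes "v \<in> coroot_cone" "- v \<in> coroot_cone" shows "v = 0"
proof -
  obtain n where n: "\<forall>k\<in>I. 0 \<le> n k" "v = (\<Sum>k\<in>I. n k *\<^sub>R coalpha k)"
    using assms(1) unfolding coroot_cone_def by auto
  have "(\<Sum>k\<in>I. (- n k) *\<^sub>R coalpha k) \<in> coroot_cone"
    using assms(2) n(2) by (simp add: sum_negf)
  then have "\<forall>k\<in>I. n k = 0"
    using n(1) nonneg_coeff_of_cone[of "\<lambda>k. - n k"] by fastforce
  then show ?thesis using n(2) by simp
qed

lemma cone_reflected_negative:
  assumes j: "j \<in> I" and "g \<in> coroot_cone" "- r j g \<in> coroot_cone"
  shows "\<exists>s. g = s *\<^sub>R coalpha j"
proof -
  obtain n where n: "\<forall>k\<in>I. 0 \<le> n k" "g = (\<Sum>k\<in>I. n k *\<^sub>R coalpha k)"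
    using assms(2) unfolding coroot_cone_def by auto
  define s where "s = alpha j \<bullet> g"
  have "- r j g = (\<Sum>k\<in>I. ((if k = j then s else 0) - n k) *\<^sub>R coalpha k)"
    using n(2) sum_coroot_single[OF j, of s]
    by (simp add: srefl_def s_def scaleR_diff_left sum_subtractf)
  then have "\<forall>k\<in>I. k \<noteq> j \<longrightarrow> n k = 0"
    using assms(3) n(1) nonneg_coeff_of_cone[of "\<lambda>k. (if k = j then s else 0) - n k"] by force
  then have "g = (\<Sum>k\<in>I. (if k = j then n j else 0) *\<^sub>R coalpha k)"
    unfolding n(2) by (intro sum.cong) auto
  then show ?thesis using sum_coroot_single[OF j] by metis
qed

lemma coeff_nonneg_of_signed:
  assumes "n \<in> I" "m \<in> I" "n \<noteq> m"
    and "coalpha n + x *\<^sub>R coalpha m \<in> coroot_cone \<or> - (coalpha n + x *\<^sub>R coalpha m) \<in> coroot_cone"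
  shows "0 \<le> x"
proof -
  define e where "e k = (if k = n then 1 else 0) + (if k = m then x else 0)" for k
  have e: "coalpha n + x *\<^sub>R coalpha m = (\<Sum>k\<in>I. e k *\<^sub>R coalpha k)"
    unfolding e_def by (simp add: scaleR_add_left sum.distrib sum_coroot_single assms(1,2))
  then have "- (coalpha n + x *\<^sub>R coalpha m) = (\<Sum>k\<in>I. (- e k) *\<^sub>R coalpha k)"
    by (simp add: sum_negf)
  then show ?thesis
    using assms nonneg_coeff_of_cone[of e] nonneg_coeff_of_cone[of "\<lambda>k. - e k"] e
    unfolding e_def by force
qed

definition rank2_point where
  "rank2_point v i j x y = v + x *\<^sub>R coalpha i + y *\<^sub>R coalpha j"

lemma rank2_point_cong: "x = x' \<Longrightarrow> y = y' \<Longrightarrow> rank2_point v i j x y = rank2_point v i j x' y'"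
  by simp

lemma inner_alpha_rank2_point:
  assumes "i \<in> I" "j \<in> I"
  shows "alpha i \<bullet> rank2_point v i j x y = alpha i \<bullet> v + 2 * x + of_int (a j i) * y"
    and "alpha j \<bullet> rank2_point v i j x y = alpha j \<bullet> v + of_int (a i j) * x + 2 * y"
  using assms by (simp_all add: rank2_point_def inner_add_right pairing cartan_diag)

lemma rank2_point_minus_coalpha:
  "rank2_point v i j x y - s *\<^sub>R coalpha i = rank2_point v i j (x - s) y"
  "rank2_point v i j x y - s *\<^sub>R coalpha j = rank2_point v i j x (y - s)"
  by (simp_all add: rank2_point_def algebra_simps)

lemma r_rank2_point:
  assumes "i \<in> I" "j \<in> I"
  shows "r i (rank2_point v i j x y) = rank2_point v i j (x - (alpha i \<bullet> v + 2 * x + of_int (a j i) * y)) y"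
    and "r j (rank2_point v i j x y) = rank2_point v i j x (y - (alpha j \<bullet> v + of_int (a i j) * x + 2 * y))"
  unfolding srefl_def inner_alpha_rank2_point[OF assms] rank2_point_minus_coalpha by simp_all

lemma alt_word_coords:
  fixes n :: nat
  assumes "i \<in> I" "j \<in> I"
  defines "c \<equiv> rank2_coords (- of_int (a j i)) (- of_int (a i j)) n"
  shows "wm (alt_word j i n) (coalpha i) = fst c *\<^sub>R coalpha i + snd c *\<^sub>R coalpha j"
  unfolding c_def
proof (induction n)
  case (Suc n)
  then show ?case
    using r_rank2_point[OF assms(1,2), of 0] unfolding rank2_point_def
    by (auto simp del: alt_word.simps(2) simp: alt_word_Suc_Cons split: prod.split)
qed simp

lemma braid_relation:
  assumes "i \<in> I" "j \<in> I"
    and "(a i j, a j i) \<in> finite_type_pairs"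
  shows "wm (alt_word j i (dihedral_order (a i j * a j i))) = wm (alt_word i j (dihedral_order (a i j * a j i)))"
proof
  fix v
  have "wm (alt_word j i (dihedral_order (a i j * a j i))) (rank2_point v i j 0 0)
      = wm (alt_word i j (dihedral_order (a i j * a j i))) (rank2_point v i j 0 0)"
    using assms(3) unfolding finite_type_pairs_def
    by (auto simp: dihedral_order_def numeral_eq_Suc r_rank2_point assms(1,2)
        intro!: rank2_point_cong; simp add: algebra_simps)
  then show "wm (alt_word j i (dihedral_order (a i j * a j i))) v
      = wm (alt_word i j (dihedral_order (a i j * a j i))) v"
    by (simp add: rank2_point_def)
qed

lemma minimal_rank2_word_is_alt_word:
  assumes ij: "i \<in> I" "j \<in> I" "i \<noteq> j" and vs: "set vs \<subseteq> {i, j}"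
    and min_w: "\<And>vs'. set vs' \<subseteq> {i, j} \<Longrightarrow> wm vs' = wm vs \<Longrightarrow> length vs \<le> length vs'"
    and min_wr: "\<And>vs'. set vs' \<subseteq> {i, j} \<Longrightarrow> wm vs' = wm vs \<circ> r i \<Longrightarrow> length vs \<le> length vs'"
  shows "vs = alt_word j i (length vs)"
proof (rule alternating_word_eq_alt_word[OF ij(3) vs])
  show "distinct_adj vs"
  proof (rule ccontr)
    assume "\<not> distinct_adj vs"
    then obtain xs x ys where vs_eq: "vs = xs @ x # x # ys" using not_distinct_adj_split by blast
    then have "x \<in> I" using vs ij by auto
    then have "wm (xs @ ys) = wm vs"
      unfolding vs_eq by (simp add: wm_append fun_eq_iff)
    moreover have "set (xs @ ys) \<subseteq> {i, j}" using vs unfolding vs_eq by auto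
    ultimately have "length vs \<le> length (xs @ ys)" by (rule min_w[rotated])
    then show False unfolding vs_eq by simp
  qed
  show "vs \<noteq> [] \<longrightarrow> last vs = j"
  proof (rule impI, rule ccontr)
    assume ne: "vs \<noteq> []" and "last vs \<noteq> j"
    then have "last vs = i" using vs last_in_set[OF ne] by blast
    then obtain us where us: "vs = us @ [i]"
      using ne by (metis append_butlast_last_id)
    then have "wm us = wm vs \<circ> r i" using ij(1) by simp
    moreover have "set us \<subseteq> {i, j}" using vs us by auto
    ultimately have "length vs \<le> length us" by (rule min_wr[rotated])
    then show False using us by simp
  qed
qed

text \<open>In finite type the coordinates are nonnegative only below the braid length, but a minimal
  word is shorter than that: otherwise the braid relation would move a letter \<open>i\<close> to its end.\<close>
lemma minimal_rank2_word_coroot_nonneg: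
  assumes ij: "i \<in> I" "j \<in> I" "i \<noteq> j" and vs: "set vs \<subseteq> {i, j}"
    and min_w: "\<And>vs'. set vs' \<subseteq> {i, j} \<Longrightarrow> wm vs' = wm vs \<Longrightarrow> length vs \<le> length vs'"
    and min_wr: "\<And>vs'. set vs' \<subseteq> {i, j} \<Longrightarrow> wm vs' = wm vs \<circ> r i \<Longrightarrow> length vs \<le> length vs'"
  shows "\<exists>p q. 0 \<le> p \<and> 0 \<le> q \<and> wm vs (coalpha i) = p *\<^sub>R coalpha i + q *\<^sub>R coalpha j"
proof -
  define k where "k = length vs"
  have vs_alt: "vs = alt_word j i k"
    unfolding k_def using minimal_rank2_word_is_alt_word[OF assms] .
  define c where "c = rank2_coords (- of_int (a j i)) (- of_int (a i j)) k"
  have "0 \<le> fst c \<and> 0 \<le> snd c"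
  proof (cases "a i j * a j i < 4")
    case True
    have pairs: "(a i j, a j i) \<in> finite_type_pairs"
      using cartan_offdiag[OF ij] cartan_offdiag[OF ij(2,1)] ij(3) True by (intro finite_type_pairsI) auto
    define m where "m = dihedral_order (a i j * a j i)"
    have "k < m"
    proof (rule ccontr)
      assume "\<not> k < m"
      then obtain xs where xs: "vs = xs @ alt_word j i m"
        using alt_word_suffix[of j i "k - m" m] vs_alt by auto
      have "0 < m" unfolding m_def dihedral_order_def by simp
      then obtain ys where ys: "alt_word i j m = ys @ [i]"
        by (metis append_butlast_last_id last_alt_word length_alt_word less_numeral_extra(3) list.size(3))
      have "wm vs = wm xs \<circ> wm (ys @ [i])"
        using braid_relation[OF ij(1,2) pairs] xs ys unfolding m_def by (simp add: wm_append)
      then have "wm (xs @ ys) = wm vs \<circ> r i"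
        using ij(1) by (simp add: wm_append fun_eq_iff)
      moreover have "set (xs @ ys) \<subseteq> {i, j}"
        using vs xs set_alt_word[of i j m] ys by auto
      ultimately have "length vs \<le> length (xs @ ys)" by (rule min_wr[rotated])
      moreover have "length ys = m - 1" using ys length_alt_word[of i j m] by simp
      ultimately show False using xs \<open>0 < m\<close> by simp
    qed
    then show ?thesis
      unfolding c_def m_def using rank2_coords_nonneg_finite_type[OF pairs] by simp
  next
    case False
    then have "4 \<le> (- of_int (a j i)) * (- of_int (a i j) :: real)"
      by (simp add: mult.commute flip: of_int_mult)
    moreover have "0 \<le> - (of_int (a j i) :: real)" "0 \<le> - (of_int (a i j) :: real)"
      using cartan_offdiag[OF ij] cartan_offdiag[OF ij(2,1)] ij(3) by auto
    ultimately show ?thesis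
      unfolding c_def using rank2_coords_nonneg_infinite_type by blast
  qed
  moreover have "wm vs (coalpha i) = fst c *\<^sub>R coalpha i + snd c *\<^sub>R coalpha j"
    unfolding c_def vs_alt using alt_word_coords[OF ij(1,2)] by simp
  ultimately show ?thesis by blast
qed

section \<open>Images of simple coroots are positive or negative\<close>

lemma rank2_factorization:
  assumes w: "w \<in> W" and ij: "i \<in> I" "j \<in> I" and descent: "len (w \<circ> r j) < len w"
  obtains v vs where "v \<in> W" "set vs \<subseteq> {i, j}" "w = v \<circ> wm vs" "len v + length vs \<le> len w"
    "len v < len w" "\<And>x. x \<in> {i, j} \<Longrightarrow> len v \<le> len (v \<circ> r x)"
proof -
  define admissible where "admissible = (\<lambda>(v, vs). v \<in> W \<and> set vs \<subseteq> {i, j} \<and> w = v \<circ> wm vs \<and> len v + length vs \<le> len w)"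
  have "admissible (w \<circ> r j, [j])"
    unfolding admissible_def using w ij descent by (auto simp: fun_eq_iff)
  then obtain v vs where v: "admissible (v, vs)" and least: "\<And>q. admissible q \<Longrightarrow> len v \<le> len (fst q)"
    using ex_has_least_nat[of admissible _ "\<lambda>p. len (fst p)"] by (metis prod.collapse)
  have "v \<in> W" "set vs \<subseteq> {i, j}" "w = v \<circ> wm vs" "len v + length vs \<le> len w"
    using v unfolding admissible_def by auto
  moreover have "len v < len w"
    using least[OF \<open>admissible (w \<circ> r j, [j])\<close>] descent by simp
  moreover have "len v \<le> len (v \<circ> r x)" if x: "x \<in> {i, j}" for x
  proof (rule ccontr)
    assume shorter: "\<not> len v \<le> len (v \<circ> r x)"
    have "x \<in> I" using x ij by auto
    with calculation have "admissible (v \<circ> r x, x # vs)"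
      unfolding admissible_def using shorter x by (auto simp: fun_eq_iff)
    then show False using least shorter by fastforce
  qed
  ultimately show ?thesis using that by blast
qed

lemma coroot_image_in_cone:
  assumes "w \<in> W" "i \<in> I" "len w \<le> len (w \<circ> r i)"
  shows "w (coalpha i) \<in> coroot_cone"
  using assms
proof (induction "len w" arbitrary: w i rule: less_induct)
  case less
  show ?case
  proof (cases "w = id")
    case True
    then show ?thesis using coalpha_in_cone[OF less.prems(2)] by simp
  next
    case False
    then obtain j where j: "j \<in> I" and descent: "len (w \<circ> r j) < len w"
      using right_descent_exists[OF less.prems(1)] by blast
    have "i \<noteq> j" using less.prems(3) descent by auto
    obtain v vs where v: "v \<in> W" and vs: "set vs \<subseteq> {i, j}" and w_eq: "w = v \<circ> wm vs"
      and len_v: "len v + length vs \<le> len w" "len v < len w"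
      and v_min: "\<And>x. x \<in> {i, j} \<Longrightarrow> len v \<le> len (v \<circ> r x)"
      using rank2_factorization[OF less.prems(1,2) j descent] by blast
    have vs_I: "set vs' \<subseteq> I" if "set vs' \<subseteq> {i, j}" for vs' using that less.prems(2) j by auto
    have "\<exists>p q. 0 \<le> p \<and> 0 \<le> q \<and> wm vs (coalpha i) = p *\<^sub>R coalpha i + q *\<^sub>R coalpha j"
    proof (rule minimal_rank2_word_coroot_nonneg[OF less.prems(2) j \<open>i \<noteq> j\<close> vs])
      show "length vs \<le> length vs'" if "set vs' \<subseteq> {i, j}" "wm vs' = wm vs" for vs'
        using len_comp_le[OF v wm_in_Weyl[OF vs_I[OF that(1)]]] len_le_length[OF vs_I[OF that(1)]]
          len_v(1) w_eq that(2) by simp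
      show "length vs \<le> length vs'" if "set vs' \<subseteq> {i, j}" "wm vs' = wm vs \<circ> r i" for vs'
        using len_comp_le[OF v wm_in_Weyl[OF vs_I[OF that(1)]]] len_le_length[OF vs_I[OF that(1)]]
          len_v(1) w_eq that(2) less.prems(3) by (simp add: comp_assoc)
    qed
    then obtain p q where pq: "0 \<le> p" "0 \<le> q" "wm vs (coalpha i) = p *\<^sub>R coalpha i + q *\<^sub>R coalpha j"
      by blast
    have "v (coalpha i) \<in> coroot_cone" "v (coalpha j) \<in> coroot_cone"
      using less.hyps[OF len_v(2) v] less.prems(2) j v_min by auto
    moreover have "w (coalpha i) = p *\<^sub>R v (coalpha i) + q *\<^sub>R v (coalpha j)"
      using w_eq pq(3) linear_Weyl[OF v] by (simp add: linear_add linear_scale)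
    ultimately show ?thesis using cone_add cone_scale pq(1,2) by simp
  qed
qed

lemma coroot_image_in_neg_cone:
  assumes "w \<in> W" "i \<in> I" "len (w \<circ> r i) < len w"
  shows "- w (coalpha i) \<in> coroot_cone"
proof -
  have "(w \<circ> r i) \<circ> r i = w" using assms(2) by (auto simp: fun_eq_iff)
  then have "(w \<circ> r i) (coalpha i) \<in> coroot_cone"
    using coroot_image_in_cone[of "w \<circ> r i" i] assms by auto
  then show ?thesis
    using assms(2) linear_Weyl[OF assms(1)] by (simp add: linear_neg)
qed

lemma coroot_image_signed:
  assumes "w \<in> W" "i \<in> I"
  shows "w (coalpha i) \<in> coroot_cone \<or> - w (coalpha i) \<in> coroot_cone"
  using coroot_image_in_cone[OF assms] coroot_image_in_neg_cone[OF assms] by fastforce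

lemma Weyl_fixing_coroots_eq_id:
  assumes w: "w \<in> W" and fixes_coroots: "\<And>k. k \<in> I \<Longrightarrow> w (coalpha k) = coalpha k"
  shows "w = id"
proof (rule ccontr)
  assume "w \<noteq> id"
  then obtain j where j: "j \<in> I" and "len (w \<circ> r j) < len w"
    using right_descent_exists[OF w] by blast
  then have "- coalpha j \<in> coroot_cone"
    using coroot_image_in_neg_cone[OF w] fixes_coroots by metis
  then have "coalpha j = 0" using cone_antisym[OF coalpha_in_cone[OF j]] by simp
  then show False using pairing_diag[OF j] by simp
qed

section \<open>Reflections and the strong exchange condition\<close>

abbreviation refls where "refls \<equiv> Wrefls I alpha coalpha"

lemma Weyl_transvection_eq_id:
  assumes m: "m \<in> I" and "g \<in> W" "h \<in> W"
    and g: "\<And>v. g v = v + \<psi> v *\<^sub>R coalpha m" and h: "\<And>v. h v = v - \<psi> v *\<^sub>R coalpha m"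
    and "\<psi> (coalpha m) = 0"
  shows "g = id"
proof (rule Weyl_fixing_coroots_eq_id[OF \<open>g \<in> W\<close>])
  fix n assume n: "n \<in> I"
  have "\<psi> (coalpha n) = 0"
  proof (cases "n = m")
    case False
    have "0 \<le> \<psi> (coalpha n)"
      using coroot_image_signed[OF \<open>g \<in> W\<close> n] coeff_nonneg_of_signed[OF n m False] g by simp
    moreover have "0 \<le> - \<psi> (coalpha n)"
      using coroot_image_signed[OF \<open>h \<in> W\<close> n] coeff_nonneg_of_signed[OF n m False, of "- \<psi> (coalpha n)"] h
      by simp
    ultimately show ?thesis by simp
  qed (use assms in simp)
  then show "g (coalpha n) = coalpha n" using g by simp
qed

lemma diff_scaleR_diff_scaleR: "(v::'a::real_vector) - p *\<^sub>R x - q *\<^sub>R x = v - (p + q) *\<^sub>R x"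
  by (simp add: algebra_simps)

text \<open>Without an invariant bilinear form, \<open>z r\<^sub>k z\<^sup>-\<^sup>1 = r\<^sub>m\<close> is obtained by showing that
  \<open>r\<^sub>m z r\<^sub>k z\<^sup>-\<^sup>1\<close>, a transvection along \<open>\<alpha>\<^sub>m\<^sup>\<or>\<close>, fixes every simple coroot.\<close>
lemma conjugate_r_eq_r:
  assumes zs: "set zs \<subseteq> I" and k: "k \<in> I" and m: "m \<in> I"
    and z_coroot: "wm zs (coalpha k) = s *\<^sub>R coalpha m" and "s \<noteq> 0"
  shows "wm zs \<circ> r k \<circ> wm (rev zs) = r m"
proof -
  define z where "z = wm zs"
  define zi where "zi = wm (rev zs)"
  define t where "t = z \<circ> r k \<circ> zi"
  define \<sigma> where "\<sigma> v = s * (alpha k \<bullet> zi v)" for v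
  define \<psi> where "\<psi> v = \<sigma> v - alpha m \<bullet> v" for v
  have "linear z" "linear zi" unfolding z_def zi_def by (simp_all add: linear_wm)
  have z_zi: "z (zi v) = v" "zi (z v) = v" for v unfolding z_def zi_def using zs by simp_all
  have zi_coroot: "zi (coalpha m) = (1 / s) *\<^sub>R coalpha k"
  proof -
    have "coalpha k = zi (s *\<^sub>R coalpha m)"
      using z_zi(2)[of "coalpha k"] z_coroot unfolding z_def by simp
    also have "\<dots> = s *\<^sub>R zi (coalpha m)"
      using \<open>linear zi\<close> by (simp add: linear_scale)
    finally show ?thesis using \<open>s \<noteq> 0\<close> by simp
  qed
  have t: "t v = v - \<sigma> v *\<^sub>R coalpha m" for v
    using z_zi z_coroot \<open>linear z\<close>
    by (simp add: t_def \<sigma>_def srefl_def z_def linear_diff linear_scale)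
  have "r m (t v) = v + \<psi> v *\<^sub>R coalpha m" for v
  proof -
    have "alpha m \<bullet> (v - \<sigma> v *\<^sub>R coalpha m) = alpha m \<bullet> v - \<sigma> v * 2"
      by (simp add: inner_diff_right pairing_diag[OF m])
    then have "r m (t v) = v - (\<sigma> v + (alpha m \<bullet> v - \<sigma> v * 2)) *\<^sub>R coalpha m"
      by (simp only: t srefl_def diff_scaleR_diff_scaleR)
    then show ?thesis by (simp add: \<psi>_def flip: scaleR_minus_left)
  qed
  moreover have "t (r m v) = v - \<psi> v *\<^sub>R coalpha m" for v
  proof -
    have zi_r: "zi (r m v) = zi v - (alpha m \<bullet> v / s) *\<^sub>R coalpha k"
      using zi_coroot \<open>linear zi\<close> by (simp add: srefl_def linear_diff linear_scale)
    have "\<sigma> (r m v) = \<sigma> v - alpha m \<bullet> v * 2"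
      unfolding \<sigma>_def zi_r using \<open>s \<noteq> 0\<close>
      by (simp add: inner_diff_right pairing_diag[OF k] algebra_simps)
    then have "t (r m v) = v - (alpha m \<bullet> v + (\<sigma> v - alpha m \<bullet> v * 2)) *\<^sub>R coalpha m"
      by (simp only: t srefl_def diff_scaleR_diff_scaleR)
    then show ?thesis by (simp add: \<psi>_def)
  qed
  moreover have "\<psi> (coalpha m) = 0"
    using \<open>s \<noteq> 0\<close> by (simp add: \<psi>_def \<sigma>_def zi_coroot pairing_diag k m)
  moreover have "r m \<circ> t \<in> W" "t \<circ> r m \<in> W"
    unfolding t_def z_def zi_def using zs k m by (auto intro!: comp_in_Weyl wm_in_Weyl)
  ultimately have "r m \<circ> t = id"
    using Weyl_transvection_eq_id[OF m, of "r m \<circ> t" "t \<circ> r m" \<psi>] by simp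
  moreover have "t = r m \<circ> (r m \<circ> t)"
    using m by (simp add: fun_eq_iff)
  ultimately have "t = r m" by simp
  then show ?thesis unfolding t_def z_def zi_def .
qed

lemma deletion_of_negated_root:
  assumes ws: "set ws \<subseteq> I" and xs: "set xs \<subseteq> I" and k: "k \<in> I"
    and pos: "wm xs (coalpha k) \<in> coroot_cone" and neg: "- wm ws (wm xs (coalpha k)) \<in> coroot_cone"
  shows "\<exists>ys j zs. ws = ys @ j # zs \<and> wm ws \<circ> (wm xs \<circ> r k \<circ> wm (rev xs)) = wm (ys @ zs)"
  using ws neg
proof (induction ws)
  case Nil
  then have "wm xs (coalpha k) = 0" using cone_antisym[OF pos] by simp
  then show ?case using xs k wm_eq_0_iff pairing_diag[OF k] by fastforce
next
  case (Cons j ws)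
  have j: "j \<in> I" and ws: "set ws \<subseteq> I" using Cons.prems(1) by auto
  define t where "t = wm xs \<circ> r k \<circ> wm (rev xs)"
  define \<beta> where "\<beta> = wm ws (wm xs (coalpha k))"
  have "\<beta> = wm (ws @ xs) (coalpha k)" by (simp add: \<beta>_def wm_append)
  then consider "- \<beta> \<in> coroot_cone" | "\<beta> \<in> coroot_cone"
    using coroot_image_signed[OF wm_in_Weyl[of "ws @ xs"] k] ws xs by auto
  then show ?case
  proof cases
    case 1
    then obtain ys j' zs where "ws = ys @ j' # zs" and del: "wm ws \<circ> t = wm (ys @ zs)"
      using Cons.IH[OF ws] unfolding \<beta>_def t_def by blast
    moreover have "wm (j # ws) \<circ> t = wm (j # ys @ zs)"
      by (simp only: wm_Cons comp_assoc del)
    ultimately show ?thesis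
      unfolding t_def by (metis append_Cons)
  next
    case 2
    moreover have "- r j \<beta> \<in> coroot_cone" using Cons.prems(2) unfolding \<beta>_def by simp
    ultimately obtain s where \<beta>_eq: "\<beta> = s *\<^sub>R coalpha j"
      using cone_reflected_negative[OF j] by blast
    have "\<beta> \<noteq> 0" unfolding \<beta>_def using ws xs k pairing_diag[OF k] by (auto simp: wm_eq_0_iff)
    then have "s \<noteq> 0" using \<beta>_eq by auto
    then have "wm (ws @ xs) \<circ> r k \<circ> wm (rev (ws @ xs)) = r j"
      using conjugate_r_eq_r[of "ws @ xs" k j s] ws xs k j \<beta>_eq by (simp add: \<beta>_def wm_append)
    then have "wm ws \<circ> t = r j \<circ> wm ws"
      using ws by (simp add: t_def wm_append fun_eq_iff) (metis wm_rev_wm)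
    then have "wm (j # ws) \<circ> t = wm ws"
      using j by (simp add: fun_eq_iff)
    then show ?thesis unfolding t_def by (metis append_Nil)
  qed
qed

lemma reflection_in_Weyl: "t \<in> refls \<Longrightarrow> t \<in> W"
  unfolding Wrefls_def by (auto intro!: comp_in_Weyl wm_in_Weyl)

lemma reflection_involutive: "t \<in> refls \<Longrightarrow> t (t v) = v"
  unfolding Wrefls_def by auto

lemma r_comp_eq_comp_reflection:
  assumes "y \<in> W" "i \<in> I" obtains t where "t \<in> refls" "r i \<circ> y = y \<circ> t"
proof -
  obtain ys where ys: "set ys \<subseteq> I" "y = wm ys" using assms(1) by (auto simp: Weyl_iff)
  then have "set (rev ys) \<subseteq> I" by simp
  then have "wm (rev ys) \<circ> r i \<circ> wm (rev (rev ys)) \<in> refls"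
    unfolding Wrefls_def using assms(2) by blast
  moreover have "r i \<circ> y = y \<circ> (wm (rev ys) \<circ> r i \<circ> wm (rev (rev ys)))"
    using ys by (simp add: fun_eq_iff)
  ultimately show ?thesis using that by blast
qed

lemma reflection_positive_root:
  assumes "t \<in> refls"
  obtains xs k where "set xs \<subseteq> I" "k \<in> I" "wm xs (coalpha k) \<in> coroot_cone"
    "t = wm xs \<circ> r k \<circ> wm (rev xs)"
proof -
  obtain xs k where xs: "set xs \<subseteq> I" and k: "k \<in> I" and t: "t = wm xs \<circ> r k \<circ> wm (rev xs)"
    using assms unfolding Wrefls_def by blast
  consider "wm xs (coalpha k) \<in> coroot_cone" | "- wm xs (coalpha k) \<in> coroot_cone"
    using coroot_image_signed[OF wm_in_Weyl[OF xs] k] by blast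
  then show ?thesis
  proof cases
    case 1
    then show ?thesis using that xs k t by blast
  next
    case 2
    text \<open>Replace the root by its negative: \<open>w r\<^sub>k\<close> gives the same reflection.\<close>
    have "wm (xs @ [k]) (coalpha k) = - wm xs (coalpha k)"
      using k by (simp add: wm_append linear_neg[OF linear_wm])
    moreover have "t = wm (xs @ [k]) \<circ> r k \<circ> wm (rev (xs @ [k]))"
      using k by (simp add: t wm_append fun_eq_iff)
    ultimately show ?thesis using that[of "xs @ [k]" k] 2 xs k by auto
  qed
qed

lemma strong_exchange:
  assumes t: "t \<in> refls" and ws: "set ws \<subseteq> I"
  shows "len (wm ws) < len (wm ws \<circ> t) \<or> (\<exists>ys j zs. ws = ys @ j # zs \<and> wm ws \<circ> t = wm (ys @ zs))"
proof -
  obtain xs k where xs: "set xs \<subseteq> I" and k: "k \<in> I" and pos: "wm xs (coalpha k) \<in> coroot_cone"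
    and t_eq: "t = wm xs \<circ> r k \<circ> wm (rev xs)"
    using reflection_positive_root[OF t] by blast
  consider "- wm ws (wm xs (coalpha k)) \<in> coroot_cone" | "wm ws (wm xs (coalpha k)) \<in> coroot_cone"
    using coroot_image_signed[OF wm_in_Weyl[of "ws @ xs"] k] ws xs by (auto simp: wm_append)
  then show ?thesis
  proof cases
    case 1
    then show ?thesis using deletion_of_negated_root[OF ws xs k pos] t_eq by blast
  next
    case 2
    text \<open>A reduced word of \<open>w t\<close> sends the root of \<open>t\<close> to a negative one; deleting a letter
      from it gives back \<open>w\<close>.\<close>
    obtain vs where vs: "set vs \<subseteq> I" "wm vs = wm ws \<circ> t" "length vs = len (wm ws \<circ> t)"
      using reduced_word_exists[OF comp_in_Weyl[OF wm_in_Weyl[OF ws] reflection_in_Weyl[OF t]]] by blast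
    have "t (wm xs (coalpha k)) = - wm xs (coalpha k)"
      using xs k by (simp add: t_eq linear_neg[OF linear_wm])
    then have "- wm vs (wm xs (coalpha k)) \<in> coroot_cone"
      using 2 vs(2) by (simp add: linear_neg[OF linear_wm])
    then obtain ys j zs where "vs = ys @ j # zs" and del: "wm vs \<circ> t = wm (ys @ zs)"
      using deletion_of_negated_root[OF vs(1) xs k pos] t_eq by blast
    moreover have "wm vs \<circ> t = wm ws"
      using vs(2) reflection_involutive[OF t] by (simp add: fun_eq_iff)
    ultimately have "len (wm ws) \<le> length (ys @ zs)"
      using len_le_length[of "ys @ zs"] vs(1) by auto
    then show ?thesis using vs(3) \<open>vs = ys @ j # zs\<close> by simp
  qed
qed

lemma len_comp_reflection_neq:
  assumes x: "x \<in> W" and t: "t \<in> refls" shows "len (x \<circ> t) \<noteq> len x"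
proof
  assume eq: "len (x \<circ> t) = len x"
  obtain xs where xs: "set xs \<subseteq> I" "wm xs = x" "length xs = len x"
    using reduced_word_exists[OF x] by blast
  then obtain ys j zs where "xs = ys @ j # zs" "x \<circ> t = wm (ys @ zs)"
    using strong_exchange[OF t xs(1)] eq by auto
  then have "len (x \<circ> t) < length xs"
    using len_le_length[of "ys @ zs"] xs(1) by fastforce
  then show False using eq xs(3) by simp
qed

section \<open>Bruhat order: lifting and subword properties\<close>

abbreviation bstep where "bstep \<equiv> bruhat_step I alpha coalpha"
abbreviation bruhat (infix "\<preceq>" 50) where "x \<preceq> y \<equiv> bruhat_le I alpha coalpha x y"

lemma bruhat_refl: "x \<in> W \<Longrightarrow> x \<preceq> x"
  unfolding bruhat_le_def by simp

lemma bruhat_trans: "x \<preceq> y \<Longrightarrow> y \<preceq> z \<Longrightarrow> x \<preceq> z"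
  unfolding bruhat_le_def by auto

lemma bruhat_stepI: "x \<in> W \<Longrightarrow> t \<in> refls \<Longrightarrow> len x < len (x \<circ> t) \<Longrightarrow> bstep x (x \<circ> t)"
  unfolding bruhat_step_def by blast

lemma bruhat_step_le: "bstep x y \<Longrightarrow> x \<preceq> y"
  unfolding bruhat_le_def bruhat_step_def by auto

lemma bruhat_step_Weyl: "bstep x y \<Longrightarrow> y \<in> W"
  unfolding bruhat_step_def using reflection_in_Weyl by blast

lemma bruhat_le_Weyl: "x \<preceq> y \<Longrightarrow> x \<in> W \<and> y \<in> W"
proof -
  have "bstep\<^sup>*\<^sup>* x y \<Longrightarrow> x \<in> W \<Longrightarrow> y \<in> W"
    by (induction rule: rtranclp_induct) (auto dest: bruhat_step_Weyl)
  then show "x \<preceq> y \<Longrightarrow> x \<in> W \<and> y \<in> W" unfolding bruhat_le_def by blast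
qed

lemma bruhat_le_len: "x \<preceq> y \<Longrightarrow> len x \<le> len y"
proof -
  have "bstep\<^sup>*\<^sup>* x y \<Longrightarrow> len x \<le> len y"
    by (induction rule: rtranclp_induct) (auto simp: bruhat_step_def)
  then show "x \<preceq> y \<Longrightarrow> len x \<le> len y" unfolding bruhat_le_def by blast
qed

lemma bruhat_le_r_comp: assumes "y \<in> W" "i \<in> I" "len y < len (r i \<circ> y)" shows "y \<preceq> r i \<circ> y"
proof -
  obtain t where t: "t \<in> refls" and eq: "r i \<circ> y = y \<circ> t"
    using r_comp_eq_comp_reflection[OF assms(1,2)] by blast
  have "len y < len (y \<circ> t)" using assms(3) unfolding eq .
  from bruhat_step_le[OF bruhat_stepI[OF assms(1) t this]] show ?thesis unfolding eq .
qed

lemma finite_bruhat_interval: assumes "u \<in> W" shows "finite {u'. u' \<preceq> u}"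
proof (rule finite_subset)
  show "{u'. u' \<preceq> u} \<subseteq> wm ` {xs. set xs \<subseteq> I \<and> length xs \<le> len u}"
  proof
    fix u' assume "u' \<in> {u'. u' \<preceq> u}"
    then have "u' \<in> W" "len u' \<le> len u" using bruhat_le_Weyl bruhat_le_len by auto
    moreover obtain xs where "set xs \<subseteq> I" "wm xs = u'" "length xs = len u'"
      using reduced_word_exists[OF \<open>u' \<in> W\<close>] by blast
    ultimately show "u' \<in> wm ` {xs. set xs \<subseteq> I \<and> length xs \<le> len u}"
      by (intro image_eqI[of _ _ xs]) auto
  qed
  show "finite (wm ` {xs. set xs \<subseteq> I \<and> length xs \<le> len u})"
    using finite_lists_length_le[OF finite_I] by simp
qed

text \<open>The case of the lifting property in which \<open>r\<^sub>i\<close> and the reflection \<open>t\<close> undo each other.\<close>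
lemma r_comp_eq_comp_reflection_if_lengths:
  assumes x: "x \<in> W" and t: "t \<in> refls" and i: "i \<in> I"
    and up_t: "len x < len (x \<circ> t)" and up_i: "len x < len (r i \<circ> x)"
    and down: "len (r i \<circ> x \<circ> t) < len (r i \<circ> x)"
  shows "r i \<circ> x = x \<circ> t"
proof -
  define x1 where "x1 = x \<circ> t"
  have x1: "x1 \<in> W" unfolding x1_def using x reflection_in_Weyl[OF t] by blast
  have "len (r i \<circ> x) \<le> len x + 1" "len x1 \<le> len (r i \<circ> x1) + 1"
    using len_r_comp_le[OF x i] len_le_r_comp[OF x1 i] .
  moreover have "len (r i \<circ> x1) < len (r i \<circ> x)" "len x < len x1"
    using down up_t unfolding x1_def by (simp_all only: comp_assoc)
  ultimately have len_rx1: "len (r i \<circ> x1) = len x" by linarith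
  obtain vs where vs: "set vs \<subseteq> I" "wm vs = r i \<circ> x1" "length vs = len (r i \<circ> x1)"
    using reduced_word_exists[OF comp_in_Weyl[OF r_in_Weyl[OF i] x1]] by blast
  have i_vs: "set (i # vs) \<subseteq> I" "wm (i # vs) = x1"
    using vs i by (auto simp: fun_eq_iff)
  have x1_t: "x1 \<circ> t = x"
    unfolding x1_def using reflection_involutive[OF t] by (simp add: fun_eq_iff)
  then have "\<not> len x1 < len (x1 \<circ> t)" using \<open>len x < len x1\<close> by simp
  then have "\<exists>ys j zs. i # vs = ys @ j # zs \<and> x1 \<circ> t = wm (ys @ zs)"
    using strong_exchange[OF t i_vs(1)] unfolding i_vs(2) by argo
  then obtain ys j zs where del: "i # vs = ys @ j # zs" "x = wm (ys @ zs)"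
    unfolding x1_t by blast
  show ?thesis
  proof (cases ys)
    case Nil
    then have "x = wm vs" using del by simp
    then have "r i \<circ> x = x1" using vs(2) i by (simp add: fun_eq_iff)
    then show ?thesis unfolding x1_def .
  next
    case (Cons y ys')
    then have "vs = ys' @ j # zs" and x_eq: "x = r i \<circ> wm (ys' @ zs)"
      using del by simp_all
    have "r i \<circ> x = wm (ys' @ zs)"
      unfolding x_eq using i by (simp add: fun_eq_iff)
    moreover have "len (wm (ys' @ zs)) < len x"
      using len_le_length[of "ys' @ zs"] vs len_rx1 \<open>vs = ys' @ j # zs\<close> by simp
    ultimately show ?thesis using up_i by simp
  qed
qed

lemma lifting_step:
  assumes step: "bstep x x1" and x: "x \<in> W" and i: "i \<in> I"
    and x1_le: "x1 \<preceq> y" and IH: "r i \<circ> x1 \<preceq> r i \<circ> y" and up: "len y < len (r i \<circ> y)"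
  shows "r i \<circ> x \<preceq> r i \<circ> y"
proof -
  obtain t where t: "t \<in> refls" "x1 = x \<circ> t" "len x < len x1"
    using step unfolding bruhat_step_def by blast
  have y: "y \<in> W" using bruhat_le_Weyl[OF x1_le] by blast
  have y_le: "y \<preceq> r i \<circ> y" using bruhat_le_r_comp[OF y i up] .
  have rx: "r i \<circ> x \<in> W" using x i by auto
  obtain t' where "t' \<in> refls" "r i \<circ> x = x \<circ> t'"
    using r_comp_eq_comp_reflection[OF x i] by blast
  then have "len (r i \<circ> x) \<noteq> len x" using len_comp_reflection_neq[OF x] by simp
  then consider (shorter) "len (r i \<circ> x) < len x" | (longer) "len x < len (r i \<circ> x)"
    by (rule linorder_neqE_nat)
  then show ?thesis
  proof cases
    case shorter
    have "r i \<circ> (r i \<circ> x) = x" using i by (auto simp: fun_eq_iff)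
    then have "r i \<circ> x \<preceq> x"
      using bruhat_le_r_comp[OF rx i] shorter by simp
    then show ?thesis
      using bruhat_step_le[OF step] x1_le y_le bruhat_trans by blast
  next
    case longer
    have rx1: "r i \<circ> x1 = r i \<circ> x \<circ> t" using t(2) by (simp add: comp_assoc)
    then have "len (r i \<circ> x1) \<noteq> len (r i \<circ> x)" using len_comp_reflection_neq[OF rx t(1)] by simp
    then consider (down) "len (r i \<circ> x1) < len (r i \<circ> x)" | (up) "len (r i \<circ> x) < len (r i \<circ> x1)"
      by (rule linorder_neqE_nat)
    then show ?thesis
    proof cases
      case up
      then have "r i \<circ> x \<preceq> r i \<circ> x1"
        using bruhat_step_le[OF bruhat_stepI[OF rx t(1)]] rx1 by simp
      then show ?thesis using IH bruhat_trans by blast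
    next
      case down
      have "r i \<circ> x = x1"
        using r_comp_eq_comp_reflection_if_lengths[OF x t(1) i _ longer] t(2,3) down rx1 by argo
      then show ?thesis using bruhat_trans[OF x1_le y_le] by (simp only:)
    qed
  qed
qed

lemma lifting:
  assumes "x \<preceq> y" "i \<in> I" "len y < len (r i \<circ> y)"
  shows "r i \<circ> x \<preceq> r i \<circ> y"
proof -
  have "bstep\<^sup>*\<^sup>* x y" "x \<in> W" using assms(1) unfolding bruhat_le_def by auto
  then show ?thesis
  proof (induction rule: converse_rtranclp_induct)
    case base
    then show ?case using assms(2) by (intro bruhat_refl comp_in_Weyl r_in_Weyl)
  next
    case (step x x1)
    have "x1 \<in> W" using bruhat_step_Weyl[OF step.hyps(1)] .
    then have "x1 \<preceq> y" using step.hyps(2) unfolding bruhat_le_def by blast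
    then show ?case
      using lifting_step[OF step.hyps(1) step.prems assms(2) _ step.IH[OF \<open>x1 \<in> W\<close>] assms(3)] by blast
  qed
qed

lemma subword_property:
  assumes "set ws \<subseteq> I" "length ws = len (wm ws)" "subseq vs ws"
  shows "wm vs \<preceq> wm ws"
  using assms
proof (induction ws arbitrary: vs)
  case Nil
  then have "vs = []" by (simp add: list_emb_Nil2)
  then show ?case using bruhat_refl[OF id_in_Weyl] by (simp only: wm_Nil)
next
  case (Cons w ws)
  have ws: "set ws \<subseteq> I" and w: "w \<in> I" using Cons.prems(1) by auto
  have reduced: "length ws = len (wm ws)" using len_tl_reduced Cons.prems(1,2) .
  have longer: "len (wm ws) < len (r w \<circ> wm ws)"
    using Cons.prems(2) reduced unfolding wm_Cons length_Cons by linarith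
  consider (skip) "subseq vs ws" | (take) vs' where "vs = w # vs'" "subseq vs' ws"
    using Cons.prems(3) by (cases vs) (auto split: if_splits)
  then show ?case
  proof cases
    case skip
    then show ?thesis
      using bruhat_trans[OF Cons.IH[OF ws reduced skip] bruhat_le_r_comp[OF wm_in_Weyl[OF ws] w longer]]
      by (simp only: wm_Cons)
  next
    case take
    then show ?thesis using lifting[OF Cons.IH[OF ws reduced take(2)] w longer] by (simp only: wm_Cons)
  qed
qed

section \<open>The operators \<open>R\<^sub>i\<close> and the Bruhat interval\<close>

lemma foldr_Rop_subset_convex_hull:
  "foldr (Rop I alpha coalpha) ws {mu} \<subseteq> convex hull {wm vs mu | vs. subseq vs ws}"
proof (induction ws)
  case Nil
  have "mu \<in> {wm vs mu | vs. subseq vs []}"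
    by (rule CollectI, rule exI[of _ "[]"]) simp
  then show ?case by (simp add: hull_inc)
next
  case (Cons i ws)
  define E where "E = foldr (Rop I alpha coalpha) ws {mu}"
  define S where "S = {wm vs mu | vs. subseq vs ws}"
  define S' where "S' = {wm vs mu | vs. subseq vs (i # ws)}"
  have "S \<subseteq> S'" unfolding S_def S'_def by (auto intro: list_emb_Cons)
  have "r i ` S \<subseteq> S'"
  proof
    fix x assume "x \<in> r i ` S"
    then obtain vs where "subseq vs ws" "x = r i (wm vs mu)" unfolding S_def by blast
    then have "subseq (i # vs) (i # ws)" "x = wm (i # vs) mu" by auto
    then show "x \<in> S'" unfolding S'_def by blast
  qed
  have "E \<subseteq> convex hull S'"
    using Cons.IH hull_mono[OF \<open>S \<subseteq> S'\<close>] unfolding E_def S_def by blast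
  moreover have "r i ` E \<subseteq> convex hull S'"
  proof -
    have "r i ` E \<subseteq> r i ` (convex hull S)" using Cons.IH unfolding E_def S_def by blast
    also have "\<dots> = convex hull (r i ` S)" by (rule convex_hull_linear_image[OF linear_r])
    also have "\<dots> \<subseteq> convex hull S'" by (rule hull_mono[OF \<open>r i ` S \<subseteq> S'\<close>])
    finally show ?thesis .
  qed
  ultimately have "convex hull (E \<union> r i ` E) \<subseteq> convex hull S'"
    by (intro convex_hull_subset) auto
  moreover have "foldr (Rop I alpha coalpha) (i # ws) {mu} \<subseteq> convex hull (E \<union> r i ` E)"
    unfolding E_def Rop_def by simp
  ultimately show ?case unfolding S'_def by blast
qed

lemma Rw_subset_convex_hull_bruhat_interval:
  assumes "u \<in> W"
  shows "Rw I alpha coalpha u mu \<subseteq> convex hull ((\<lambda>u'. u' mu) ` {u'. u' \<preceq> u})"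
proof
  fix nu assume "nu \<in> Rw I alpha coalpha u mu"
  then obtain ws where ws: "set ws \<subseteq> I" "wm ws = u" "length ws = len u"
    and nu: "nu \<in> foldr (Rop I alpha coalpha) ws {mu}"
    unfolding Rw_def reduced_expr_def by blast
  have "{wm vs mu | vs. subseq vs ws} \<subseteq> (\<lambda>u'. u' mu) ` {u'. u' \<preceq> u}"
    using subword_property[OF ws(1)] ws(2,3) by blast
  then show "nu \<in> convex hull ((\<lambda>u'. u' mu) ` {u'. u' \<preceq> u})"
    using foldr_Rop_subset_convex_hull[of ws mu] nu hull_mono by blast
qed

end

lemma convex_hull_image_weights:
  fixes f :: "'b \<Rightarrow> 'a::real_vector"
  assumes B: "finite B" and y: "y \<in> convex hull (f ` B)"
  obtains lam where "\<forall>b\<in>B. 0 \<le> lam b" "sum lam B = 1" "y = (\<Sum>b\<in>B. lam b *\<^sub>R f b)"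
proof -
  obtain u where u: "\<forall>x\<in>f ` B. 0 \<le> u x" "sum u (f ` B) = 1" "(\<Sum>x\<in>f ` B. u x *\<^sub>R x) = y"
    using y unfolding convex_hull_finite[OF finite_imageI[OF B]] by blast
  define fiber where "fiber x = {b \<in> B. f b = x}" for x
  text \<open>Spread the weight of each point evenly over its preimage.\<close>
  define lam where "lam b = u (f b) / card (fiber (f b))" for b
  have fiber_sum: "(\<Sum>b\<in>fiber x. lam b) = u x" if "x \<in> f ` B" for x
  proof -
    have "finite (fiber x)" "fiber x \<noteq> {}" using B that by (auto simp: fiber_def)
    moreover have "lam b = u x / card (fiber x)" if "b \<in> fiber x" for b
      using that by (simp add: lam_def fiber_def)
    ultimately show ?thesis by simp
  qed
  have "sum lam B = (\<Sum>x\<in>f ` B. \<Sum>b\<in>fiber x. lam b)"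
    unfolding fiber_def by (rule sum.image_gen[OF B])
  also have "\<dots> = 1" using fiber_sum u(2) by simp
  finally have sum_lam: "sum lam B = 1" .
  have "(\<Sum>b\<in>B. lam b *\<^sub>R f b) = (\<Sum>x\<in>f ` B. \<Sum>b\<in>fiber x. lam b *\<^sub>R f b)"
    unfolding fiber_def by (rule sum.image_gen[OF B])
  also have "\<dots> = (\<Sum>x\<in>f ` B. (\<Sum>b\<in>fiber x. lam b) *\<^sub>R x)"
    by (intro sum.cong refl) (simp add: fiber_def scaleR_sum_left)
  also have "\<dots> = y" using fiber_sum u(3) by simp
  finally have "(\<Sum>b\<in>B. lam b *\<^sub>R f b) = y" .
  moreover have "\<forall>b\<in>B. 0 \<le> lam b" using u(1) by (simp add: lam_def)
  ultimately show ?thesis using that sum_lam by auto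
qed

theorem mainTheorem7:
  fixes I :: "'i set" and a :: "'i \<Rightarrow> 'i \<Rightarrow> int"
    and alpha coalpha :: "'i \<Rightarrow> real^'d"
    and u :: "real^'d \<Rightarrow> real^'d" and mu nu :: "real^'d"
  assumes "finite I"
    and "gcm I a"
    and "\<forall>i\<in>I. coalpha i \<in> Ylat"
    and "\<forall>i\<in>I. \<forall>k. alpha i $ k \<in> \<int>"
    and "inj_on coalpha I" and "independent (coalpha ` I)"
    and "\<forall>i\<in>I. \<forall>j\<in>I. alpha j \<bullet> coalpha i = of_int (a i j)"
    and "u \<in> Weyl I alpha coalpha"
    and "mu \<in> Ylat"
    and "nu \<in> Rw I alpha coalpha u mu"
  shows "\<exists>lam :: (real^'d \<Rightarrow> real^'d) \<Rightarrow> real.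
           (\<forall>u'. bruhat_le I alpha coalpha u' u \<longrightarrow> 0 \<le> lam u' \<and> lam u' \<le> 1)
         \<and> (\<Sum>u'\<in>{u'. bruhat_le I alpha coalpha u' u}. lam u') = 1
         \<and> nu = (\<Sum>u'\<in>{u'. bruhat_le I alpha coalpha u' u}. lam u' *\<^sub>R u' mu)"
proof -
  interpret gcm_realization I a alpha coalpha
    using assms(1,2,5-7) by unfold_locales auto
  define B where "B = {u'. u' \<preceq> u}"
  have "finite B" unfolding B_def using finite_bruhat_interval[OF assms(8)] .
  moreover have "nu \<in> convex hull ((\<lambda>u'. u' mu) ` B)"
    using Rw_subset_convex_hull_bruhat_interval[OF assms(8)] assms(10) unfolding B_def by blast
  ultimately obtain lam where lam: "\<forall>b\<in>B. 0 \<le> lam b" "sum lam B = 1" "nu = (\<Sum>b\<in>B. lam b *\<^sub>R b mu)"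
    by (rule convex_hull_image_weights)
  moreover have "lam b \<le> 1" if "b \<in> B" for b
    using member_le_sum[of b B lam] that lam(1,2) \<open>finite B\<close> by simp
  ultimately show ?thesis unfolding B_def by blast
qed

end
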